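(* Let $\mu$ be a Borel probability measure on $\mathbb{T}^n$ and let $(B_1,\dots,B_n)$ be an $n$-tuple of matrices in $M_n(\mathbb{Z})$ which is strongly independent over $\mathbb{Q}$. If there is a nonzero $k\in\mathbb{Z}^{n\times 1}$ such that $\hat\mu(B_ik)=1$ for every $1\le i\le n$, then $\mu$ is finitely supported.
   Context: For $k=(k_1,\dots,k_n)^T\in\mathbb{Z}^{n\times 1}$ and $z=(z_1,\dots,z_n)\in\mathbb{T}^n$, $z^k=z_1^{k_1}\cdots z_n^{k_n}$ and $\hat\mu(k)=\int_{\mathbb{T}^n}z^k\,d\mu(z)$. An $n$-tuple $(B_1,\dots,B_n)$ of integer $n\times n$ matrices is strongly independent over $\mathbb{Q}$ if for every nonzero $v\in\mathbb{Q}^{n\times 1}$ the vectors $B_1v,\dots,B_nv$ are linearly independent over $\mathbb{Q}$. *)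

theory Defs
  imports "HOL-Probability.Probability"
begin

definition torus :: "(complex ^ 'n) set" where
  "torus = {z. \<forall>i. norm (z $ i) = 1}"

definition monom_pow :: "complex ^ 'n \<Rightarrow> int ^ 'n \<Rightarrow> complex" where
  "monom_pow z k = (\<Prod>i\<in>UNIV. (z $ i) powi (k $ i))"

definition fourier_coeff :: "(complex ^ 'n) measure \<Rightarrow> int ^ 'n \<Rightarrow> complex" where
  "fourier_coeff M k = integral\<^sup>L M (\<lambda>z. monom_pow z k)"

definition rat_mat :: "int ^ 'n ^ 'm \<Rightarrow> rat ^ 'n ^ 'm" where
  "rat_mat A = (\<chi> r c. of_int (A $ r $ c))"

definition strongly_independent :: "('n \<Rightarrow> int ^ 'n ^ 'n) \<Rightarrow> bool" where
  "strongly_independent B \<longleftrightarrow>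
     (\<forall>v :: rat ^ 'n. v \<noteq> 0 \<longrightarrow>
        (\<forall>c :: 'n \<Rightarrow> rat. (\<Sum>i\<in>UNIV. c i *s (rat_mat (B i) *v v)) = 0 \<longrightarrow> (\<forall>i. c i = 0)))"

definition borel_prob_on_torus :: "(complex ^ 'n) measure \<Rightarrow> bool" where
  "borel_prob_on_torus M \<longleftrightarrow> prob_space M \<and> sets M = sets (restrict_space borel torus)"

definition finitely_supported :: "'a measure \<Rightarrow> bool" where
  "finitely_supported M \<longleftrightarrow> (\<exists>S. finite S \<and> S \<in> sets M \<and> emeasure M S = emeasure M (space M))"

end

theory Submission
  imports Defs
begin

text \<open>On the torus every monomial z^m has modulus 1, so \<mu>-hat(m) = 1 forces z^m = 1
  \<mu>-almost everywhere. Strong independence, applied to the vector k, makes B_1 k, ..., B_n k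
  linearly independent over Q; clearing denominators in the inverse of the matrix C with these
  rows gives an integer matrix E with E C = N I for some N > 0. Since m \<mapsto> z^m is a group
  homomorphism from Z^n to the nonzero complex numbers, the relations z^(B_i k) = 1 then give
  z_j^N = z^(row j of E C) = 1 for every j. Hence \<mu> is concentrated on the finite set of
  N-torsion points of the torus.\<close>

lemma power_int_prod:
  fixes f :: "'a \<Rightarrow> 'b::field"
  assumes "finite A"
  shows "(\<Prod>a\<in>A. f a) powi m = (\<Prod>a\<in>A. f a powi m)"
  using assms by (induction A rule: finite_induct) (simp_all add: power_int_mult_distrib)

lemma matrix_mult_row_eq_sum: "(A ** B) $ i = (\<Sum>j\<in>UNIV. A $ i $ j *s B $ j)"
  by (simp add: vec_eq_iff matrix_matrix_mult_def sum_component mult.commute)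

lemma mat_row_eq_axis: "(mat c :: 'a::zero ^ 'n ^ 'n) $ i = axis i c"
  by (simp add: vec_eq_iff mat_def axis_def)

lemma rat_common_denominator:
  fixes A :: "rat set"
  assumes "finite A"
  shows "\<exists>d::int. d > 0 \<and> (\<forall>x\<in>A. of_int d * x \<in> \<int>)"
  using assms
proof (induction A rule: finite_induct)
  case empty
  show ?case by (intro exI[of _ 1]) simp
next
  case (insert x A)
  obtain d where d: "d > 0" "\<forall>y\<in>A. of_int d * y \<in> \<int>"
    using insert.IH by blast
  obtain p q where pq: "quotient_of x = (p, q)"
    by fastforce
  have "q > 0"
    using pq by (rule quotient_of_denom_pos)
  have "of_int q * x = of_int p"
    using quotient_of_div[OF pq] \<open>q > 0\<close> by simp
  have "of_int (d * q) * y \<in> \<int>" if "y \<in> insert x A" for y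
  proof (cases "y = x")
    case True
    then show ?thesis
      using \<open>of_int q * x = of_int p\<close> by (simp add: mult.assoc)
  next
    case False
    then have "of_int q * (of_int d * y) \<in> \<int>"
      using that d(2) by (simp add: Ints_mult)
    then show ?thesis
      by (simp add: ac_simps)
  qed
  then show ?case
    using d(1) \<open>q > 0\<close> by (intro exI[of _ "d * q"]) simp
qed

lemma int_matrix_scaled_left_inverse:
  fixes C :: "int ^ 'n ^ 'n"
  assumes "invertible (rat_mat C)"
  obtains N :: nat and E :: "int ^ 'n ^ 'n" where "N > 0" and "E ** C = mat (int N)"
proof -
  obtain D where D: "D ** rat_mat C = mat 1"
    using assms invertible_left_inverse by blast
  obtain d :: int where "d > 0" and d: "\<forall>x\<in>range (\<lambda>(i, j). D $ i $ j). of_int d * x \<in> \<int>"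
    using rat_common_denominator[of "range (\<lambda>(i, j). D $ i $ j)"] by auto
  have "\<exists>e. of_int e = of_int d * D $ i $ j" for i j
    using d by (metis (mono_tags) Ints_cases case_prod_conv rangeI)
  then obtain e where e: "\<And>i j. of_int (e i j) = of_int d * D $ i $ j"
    by metis
  define E where "E = (\<chi> i j. e i j)"
  have "(of_int ((E ** C) $ i $ j) :: rat) = of_int (mat d $ i $ j)" for i j
  proof -
    have "(of_int ((E ** C) $ i $ j) :: rat) = of_int d * (D ** rat_mat C) $ i $ j"
      by (simp add: E_def e rat_mat_def matrix_matrix_mult_def sum_distrib_left mult.assoc)
    also have "\<dots> = of_int (mat d $ i $ j)"
      by (simp add: D mat_def)
    finally show ?thesis .
  qed
  then have "E ** C = mat d"
    by (simp add: vec_eq_iff)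
  with \<open>d > 0\<close> show thesis
    by (intro that[of "nat d" E]) simp_all
qed

lemma complex_eq_1_if_norm_le_1_Re_eq_1:
  fixes w :: complex
  assumes "norm w \<le> 1" and "Re w = 1"
  shows "w = 1"
proof -
  have "(Re w)\<^sup>2 + (Im w)\<^sup>2 \<le> 1"
    using assms(1) by (simp add: cmod_def)
  then have "Im w = 0"
    using assms(2) by simp
  then show ?thesis
    using assms(2) by (simp add: complex_eq_iff)
qed

lemma (in prob_space) AE_eq_1_if_integral_eq_1:
  fixes f :: "'a \<Rightarrow> complex"
  assumes bounded: "AE x in M. norm (f x) \<le> 1" and integral: "integral\<^sup>L M f = 1"
  shows "AE x in M. f x = 1"
proof -
  have "integrable M f"
    using integral not_integrable_integral_eq by force
  then have int_g: "integrable M (\<lambda>x. 1 - Re (f x))"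
    by simp
  have "AE x in M. 0 \<le> 1 - Re (f x)"
    using bounded
  proof (rule eventually_mono)
    fix x
    assume "norm (f x) \<le> 1"
    then show "0 \<le> 1 - Re (f x)"
      using complex_Re_le_cmod[of "f x"] by linarith
  qed
  moreover have "(\<integral>x. 1 - Re (f x) \<partial>M) = 0"
    using \<open>integrable M f\<close> integral by (simp add: prob_space)
  ultimately have "AE x in M. 1 - Re (f x) = 0"
    using integral_nonneg_eq_0_iff_AE[OF int_g] by simp
  with bounded show ?thesis
    by eventually_elim (simp add: complex_eq_1_if_norm_le_1_Re_eq_1)
qed

lemma finitely_supportedI:
  assumes "finite S" and "S \<in> sets M" and "AE x in M. x \<in> S"
  shows "finitely_supported M"
proof -
  have "emeasure M S = emeasure M (space M)"
    using assms(2,3) by (intro emeasure_eq_AE) auto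
  with assms(1,2) show ?thesis
    unfolding finitely_supported_def by blast
qed

lemma monom_pow_zero [simp]: "monom_pow z 0 = 1"
  by (simp add: monom_pow_def)

lemma monom_pow_add:
  assumes "\<forall>i. z $ i \<noteq> 0"
  shows "monom_pow z (a + b) = monom_pow z a * monom_pow z b"
  by (simp add: monom_pow_def power_int_add assms prod.distrib)

lemma monom_pow_sum:
  assumes "\<forall>i. z $ i \<noteq> 0" and "finite A"
  shows "monom_pow z (\<Sum>a\<in>A. f a) = (\<Prod>a\<in>A. monom_pow z (f a))"
  using assms(2) by (induction A rule: finite_induct) (simp_all add: monom_pow_add assms(1))

lemma monom_pow_scale: "monom_pow z (m *s a) = monom_pow z a powi m"
  unfolding monom_pow_def power_int_prod[OF finite]
  by (simp add: power_int_mult mult.commute[of m])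

lemma monom_pow_axis: "monom_pow z (axis j m) = z $ j powi m"
  by (simp add: monom_pow_def axis_def if_distrib cong: if_cong)

lemma monom_pow_eq_1_imp_power_eq_1:
  fixes C E :: "int ^ 'n ^ 'n"
  assumes "E ** C = mat (int N)" and "\<forall>i. z $ i \<noteq> 0" and "\<forall>i. monom_pow z (C $ i) = 1"
  shows "z $ j ^ N = 1"
proof -
  have "z $ j ^ N = monom_pow z ((E ** C) $ j)"
    by (simp add: assms(1) mat_row_eq_axis monom_pow_axis)
  also have "\<dots> = (\<Prod>i\<in>UNIV. monom_pow z (C $ i) powi (E $ j $ i))"
    by (simp add: matrix_mult_row_eq_sum monom_pow_sum assms(2) monom_pow_scale)
  also have "\<dots> = 1"
    by (simp add: assms(3))
  finally show ?thesis .
qed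

lemma strongly_independent_invertible:
  fixes B :: "'n \<Rightarrow> int ^ 'n ^ 'n"
  assumes "strongly_independent B" and "k \<noteq> 0"
  shows "invertible (rat_mat (\<chi> i. B i *v k))"
proof -
  define v :: "rat ^ 'n" where "v = (\<chi> j. of_int (k $ j))"
  have "v \<noteq> 0"
    using assms(2) by (simp add: v_def vec_eq_iff)
  moreover have "row i (rat_mat (\<chi> i. B i *v k)) = rat_mat (B i) *v v" for i
    by (simp add: vec_eq_iff row_def rat_mat_def v_def matrix_vector_mult_def)
  ultimately have "\<exists>D. rat_mat (\<chi> i. B i *v k) ** D = mat 1"
    using assms(1) unfolding matrix_right_invertible_independent_rows strongly_independent_def
    by simp
  then show ?thesis
    using invertible_def matrix_left_right_inverse by blast
qed

lemma torus_nth_nonzero: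
  assumes "z \<in> torus"
  shows "z $ i \<noteq> 0"
proof -
  have "norm (z $ i) = 1"
    using assms by (simp add: torus_def)
  then show ?thesis
    by auto
qed

lemma norm_monom_pow_torus: "z \<in> torus \<Longrightarrow> norm (monom_pow z m) = 1"
  by (simp add: torus_def monom_pow_def prod_norm[symmetric] norm_power_int)

lemma finite_vec_roots_unity:
  assumes "N > 0"
  shows "finite {z :: complex ^ 'n. \<forall>j. z $ j ^ N = 1}"
proof -
  have "vec_nth ` {z :: complex ^ 'n. \<forall>j. z $ j ^ N = 1} \<subseteq> PiE UNIV (\<lambda>_. {w. w ^ N = 1})"
    by auto
  moreover have "finite (PiE (UNIV :: 'n set) (\<lambda>_. {w :: complex. w ^ N = 1}))"
    using assms by (intro finite_PiE finite_roots_unity) auto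
  ultimately have "finite (vec_nth ` {z :: complex ^ 'n. \<forall>j. z $ j ^ N = 1})"
    by (rule finite_subset)
  then show ?thesis
    by (rule finite_imageD) (simp add: inj_on_def vec_eq_iff)
qed

lemma space_borel_prob_on_torus:
  assumes "borel_prob_on_torus M"
  shows "space M = torus"
proof -
  have "space M = space (restrict_space borel torus)"
    by (rule sets_eq_imp_space_eq) (use assms in \<open>simp add: borel_prob_on_torus_def\<close>)
  then show ?thesis
    by (simp add: space_restrict_space)
qed

lemma finite_in_sets_borel_prob_on_torus:
  assumes "borel_prob_on_torus M" and "finite S" and "S \<subseteq> torus"
  shows "S \<in> sets M"
proof -
  have "S \<in> sets borel"
    using assms(2) by (simp add: finite_imp_closed)
  moreover have "S = torus \<inter> S"
    using assms(3) by blast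
  ultimately have "S \<in> sets (restrict_space borel torus)"
    unfolding sets_restrict_space by (rule rev_image_eqI)
  with assms(1) show ?thesis
    by (simp add: borel_prob_on_torus_def)
qed

lemma AE_monom_pow_eq_1_if_fourier_coeff_eq_1:
  assumes "borel_prob_on_torus M" and "fourier_coeff M m = 1"
  shows "AE z in M. monom_pow z m = 1"
proof -
  interpret prob_space M
    using assms(1) by (simp add: borel_prob_on_torus_def)
  show ?thesis
  proof (rule AE_eq_1_if_integral_eq_1)
    show "AE z in M. norm (monom_pow z m) \<le> 1"
      using space_borel_prob_on_torus[OF assms(1)] by (intro AE_I2) (simp add: norm_monom_pow_torus)
    show "integral\<^sup>L M (\<lambda>z. monom_pow z m) = 1"
      using assms(2) by (simp add: fourier_coeff_def)
  qed
qed

theorem lemma4p4: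
  fixes M :: "(complex ^ 'n) measure"
    and B :: "'n \<Rightarrow> int ^ 'n ^ 'n"
    and k :: "int ^ 'n"
  assumes "borel_prob_on_torus M"
    and "strongly_independent B"
    and "k \<noteq> 0"
    and "\<forall>i. fourier_coeff M (B i *v k) = 1"
  shows "finitely_supported M"
proof -
  define C where "C = (\<chi> i. B i *v k)"
  obtain N E where "N > 0" and EC: "E ** C = mat (int N)"
    using int_matrix_scaled_left_inverse strongly_independent_invertible[OF assms(2,3)]
    unfolding C_def by blast
  define T where "T = torus \<inter> {z :: complex ^ 'n. \<forall>j. z $ j ^ N = 1}"
  have "finite T"
    unfolding T_def using finite_vec_roots_unity[OF \<open>N > 0\<close>] by blast
  moreover have "T \<in> sets M"
    using assms(1) \<open>finite T\<close> by (intro finite_in_sets_borel_prob_on_torus) (auto simp: T_def)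
  moreover have "AE z in M. z \<in> T"
  proof -
    have "AE z in M. \<forall>i\<in>UNIV. monom_pow z (C $ i) = 1"
      using assms(1,4) by (intro AE_finite_allI) (simp_all add: C_def AE_monom_pow_eq_1_if_fourier_coeff_eq_1)
    with AE_space show ?thesis
      by eventually_elim
        (simp add: T_def space_borel_prob_on_torus[OF assms(1)] torus_nth_nonzero
          monom_pow_eq_1_imp_power_eq_1[OF EC])
  qed
  ultimately show ?thesis
    by (rule finitely_supportedI)
qed

end
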